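(* Let $L\in R[x][\partial]$ have order $r>0$, and let $p\in R[x]$ be a primitive polynomial dividing $\mathrm{lc}_\partial(L)$. If there exists a $p$-removing operator for $L$ over $Q_R[x]$, then there exists a $p$-removing operator for $L$ over $R[x]$ of the same order.
   Context: $R$ is a principal ideal domain with quotient field $Q_R$; $\sigma$ is an $R$-automorphism of $R[x]$ with $\sigma(x)=\gamma x+\tau$ ($\gamma$ a unit), $\delta$ an $R$-linear $\sigma$-derivation with $\deg\delta(x)\le1$; $R[x][\partial]$ is the Ore algebra with $\partial p=\sigma(p)\partial+\delta(p)$, contained in $Q_R[x][\partial]\subseteq Q_R(x)[\partial]$. Primitive: coefficients have gcd $1$. For a coefficient ring $D\in\{R[x],Q_R[x]\}$ and $p\in D$ dividing $\mathrm{lc}_\partial(L)$, a $p$-removing operator for $L$ over $D$ of order $k$ is $P\in Q_R(x)[\partial]$ of order $k$ such that $PL\in D[\partial]$ and $\sigma^{-k}(\mathrm{lc}_\partial(PL))=\frac{w}{vp}\mathrm{lc}_\partial(L)$ for some $w,v\in D$ with $\gcd(p,w)=1$ in $D$. *)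

theory Defs
  imports "HOL-Computational_Algebra.Polynomial" "HOL-Computational_Algebra.Polynomial_Factorial"
begin

definition is_pid :: "'a::idom itself \<Rightarrow> bool" where
  "is_pid _ \<longleftrightarrow> (\<forall>I::'a set. (0 \<in> I \<and> (\<forall>a\<in>I. \<forall>b\<in>I. a - b \<in> I) \<and> (\<forall>a\<in>I. \<forall>r. r * a \<in> I))
      \<longrightarrow> (\<exists>g. I = range (\<lambda>r. r * g)))"

definition primitive_poly :: "'a::idom poly \<Rightarrow> bool" where
  "primitive_poly p \<longleftrightarrow> (\<forall>d. (\<forall>i. d dvd coeff p i) \<longrightarrow> d dvd 1)"

definition coprime_in :: "'a::idom \<Rightarrow> 'a \<Rightarrow> bool" where
  "coprime_in a b \<longleftrightarrow> (\<forall>c. c dvd a \<longrightarrow> c dvd b \<longrightarrow> c dvd 1)"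

type_synonym 'a ratfun = "'a fract poly fract"

definition embQx :: "'a::idom fract poly \<Rightarrow> 'a ratfun" where
  "embQx q = to_fract q"

definition embRx :: "'a::idom poly \<Rightarrow> 'a ratfun" where
  "embRx p = to_fract (map_poly to_fract p)"

definition embR :: "'a::idom \<Rightarrow> 'a ratfun" where
  "embR c = embRx [:c:]"

definition varX :: "'a::idom ratfun" where
  "varX = embRx [:0, 1:]"

text \<open>Ore operators with coefficients in a field K are represented as polynomials in \<partial>
  (type K poly); the coefficient of \<partial>^i is coeff P i, the order is degree, lc is lead_coeff.
  Multiplication: \<partial> p = \<sigma>(p) \<partial> + \<delta>(p).\<close>
definition ore_d :: "('k \<Rightarrow> 'k) \<Rightarrow> ('k \<Rightarrow> 'k) \<Rightarrow> 'k::comm_ring_1 poly \<Rightarrow> 'k poly" where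
  "ore_d \<sigma> \<delta> L = pCons 0 (map_poly \<sigma> L) + map_poly \<delta> L"

definition ore_mult :: "('k \<Rightarrow> 'k) \<Rightarrow> ('k \<Rightarrow> 'k) \<Rightarrow> 'k::comm_ring_1 poly \<Rightarrow> 'k poly \<Rightarrow> 'k poly" where
  "ore_mult \<sigma> \<delta> P L = (\<Sum>i\<le>degree P. smult (coeff P i) ((ore_d \<sigma> \<delta> ^^ i) L))"

definition p_removing ::
  "('k \<Rightarrow> 'k) \<Rightarrow> ('k \<Rightarrow> 'k) \<Rightarrow> ('d::idom \<Rightarrow> 'k::field) \<Rightarrow> 'd \<Rightarrow> 'k poly \<Rightarrow> 'k poly \<Rightarrow> nat \<Rightarrow> bool" where
  "p_removing \<sigma> \<delta> emb p L P k \<longleftrightarrow>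
     P \<noteq> 0 \<and> degree P = k \<and>
     (\<forall>i. coeff (ore_mult \<sigma> \<delta> P L) i \<in> range emb) \<and>
     (\<exists>w v. v \<noteq> 0 \<and> coprime_in p w \<and>
        (inv \<sigma> ^^ k) (lead_coeff (ore_mult \<sigma> \<delta> P L)) = emb w / (emb v * emb p) * lead_coeff L)"

end

theory Submission
  imports Defs
begin

text \<open>A Q_R[x]-removing operator P becomes an R[x]-removing one after multiplication by a
  common denominator c \<in> R of the coefficients of PL. Since \<sigma> fixes R, the leading
  coefficient condition is merely rescaled by c; clearing the denominators of w and v
  turns it into a condition over R[x], and coprimality of p and w survives because p is
  primitive.\<close>

lemma fract_poly_clear_denominators:
  fixes q :: "'a::idom fract poly"
  obtains d q0 where "d \<noteq> 0" "fract_poly q0 = smult (to_fract d) q"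
proof -
  have "\<exists>d q0. d \<noteq> 0 \<and> fract_poly q0 = smult (to_fract d) q"
  proof (induction q)
    case 0
    show ?case by (intro exI[of _ 1] exI[of _ 0]) simp
  next
    case (pCons a q)
    then obtain d q0 where d: "d \<noteq> 0" "fract_poly q0 = smult (to_fract d) q" by blast
    obtain n m where a: "a = Fract n m" "m \<noteq> 0" by (cases a)
    have am: "to_fract m * a = to_fract n" using a by (simp add: Fract_conv_to_fract)
    have "fract_poly (pCons (n * d) (smult m q0)) = smult (to_fract (d * m)) (pCons a q)"
      using d by (simp add: map_poly_pCons algebra_simps flip: am)
    moreover have "d * m \<noteq> 0" using d a by simp
    ultimately show ?case by blast
  qed
  then show ?thesis using that by blast
qed

lemma fract_poly_clear_common_denominator:
  fixes f :: "'i \<Rightarrow> 'a::idom fract poly"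
  assumes "finite I"
  obtains d where "d \<noteq> 0" "\<And>i. i \<in> I \<Longrightarrow> \<exists>q0. fract_poly q0 = smult (to_fract d) (f i)"
proof -
  from assms have "\<exists>d. d \<noteq> 0 \<and> (\<forall>i\<in>I. \<exists>q0. fract_poly q0 = smult (to_fract d) (f i))"
  proof (induction I rule: finite_induct)
    case empty
    show ?case by (intro exI[of _ 1]) simp
  next
    case (insert j I)
    then obtain d where d: "d \<noteq> 0" "\<forall>i\<in>I. \<exists>q0. fract_poly q0 = smult (to_fract d) (f i)"
      by blast
    obtain e q1 where e: "e \<noteq> 0" "fract_poly q1 = smult (to_fract e) (f j)"
      by (rule fract_poly_clear_denominators)
    have "\<exists>q0. fract_poly q0 = smult (to_fract (d * e)) (f i)" if "i \<in> insert j I" for i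
    proof (cases "i = j")
      case True
      have "fract_poly (smult d q1) = smult (to_fract (d * e)) (f j)"
        using e(2) by (simp add: mult.commute)
      then show ?thesis using True by blast
    next
      case False
      with that have "i \<in> I" by simp
      then obtain q0 where "fract_poly q0 = smult (to_fract d) (f i)" using d(2) by blast
      then have "fract_poly (smult e q0) = smult (to_fract (d * e)) (f i)"
        by (simp add: mult.commute)
      then show ?thesis by blast
    qed
    moreover have "d * e \<noteq> 0" using d e by simp
    ultimately show ?case by blast
  qed
  then show ?thesis using that by auto
qed

lemma coprime_in_fract_poly_cleared:
  fixes p w' :: "'a::idom poly" and w :: "'a fract poly"
  assumes prim: "primitive_poly p" and cop: "coprime_in (fract_poly p) w"
    and w': "fract_poly w' = smult a w" and a: "a \<noteq> 0"
  shows "coprime_in p w'"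
  unfolding coprime_in_def
proof (intro allI impI)
  fix q assume qp: "q dvd p" and qw: "q dvd w'"
  have "fract_poly q dvd w"
    using fract_poly_dvd[OF qw] w' a dvd_smult_cancel by metis
  with fract_poly_dvd[OF qp] have unit: "fract_poly q dvd 1"
    using cop unfolding coprime_in_def by blast
  then have "fract_poly q \<noteq> 0" by auto
  then have "degree (fract_poly q) = 0" using unit is_unit_iff_degree by blast
  then have "degree q = 0" using degree_map_poly[of to_fract q] by simp
  then have q_const: "q = [:coeff q 0:]" by (metis degree_0_id)
  then have "\<forall>n. coeff q 0 dvd coeff p n" using qp const_poly_dvd_iff by metis
  then have "coeff q 0 dvd 1" using prim unfolding primitive_poly_def by blast
  then show "q dvd 1" by (subst q_const) (simp add: is_unit_const_poly_iff)
qed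

lemma embRx_mult: "embRx (a * b) = embRx a * embRx b"
  by (simp add: embRx_def to_fract_mult)

lemma embR_mult: "embR (a * b) = embR a * embR b"
  unfolding embR_def by (simp add: mult.commute flip: embRx_mult)

lemma embRx_smult: "embRx (smult c a) = embR c * embRx a"
  unfolding embR_def by (simp flip: embRx_mult)

lemma embR_eq_0_iff [simp]: "embR c = 0 \<longleftrightarrow> c = 0"
  by (simp add: embR_def embRx_def)

lemma embQx_fract_poly: "embQx (fract_poly p) = embRx p"
  by (simp add: embQx_def embRx_def)

lemma embRx_cleared:
  assumes "fract_poly q0 = smult (to_fract d) q"
  shows "embRx q0 = embR d * embQx q"
proof -
  have "embRx q0 = to_fract ([:to_fract d:] * q)" using assms by (simp add: embRx_def)
  moreover have "embR d = to_fract [:to_fract d:]" by (simp add: embR_def embRx_def map_poly_pCons)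
  ultimately show ?thesis by (simp only: embQx_def to_fract_mult)
qed

lemma ore_mult_smult:
  fixes c :: "'k::field"
  assumes "c \<noteq> 0"
  shows "ore_mult \<sigma> \<delta> (smult c P) L = smult c (ore_mult \<sigma> \<delta> P L)"
proof -
  have "ore_mult \<sigma> \<delta> (smult c P) L =
      (\<Sum>i\<le>degree P. [:c:] * smult (coeff P i) ((ore_d \<sigma> \<delta> ^^ i) L))"
    using assms by (simp add: ore_mult_def degree_smult_eq mult.commute)
  also have "\<dots> = [:c:] * ore_mult \<sigma> \<delta> P L" by (simp add: ore_mult_def sum_distrib_left)
  finally show ?thesis by simp
qed

lemma funpow_inv_mult_fixed:
  fixes \<sigma> :: "'k::times \<Rightarrow> 'k"
  assumes "bij \<sigma>" and mult: "\<And>f g. \<sigma> (f * g) = \<sigma> f * \<sigma> g" and fixed: "\<sigma> c = c"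
  shows "(inv \<sigma> ^^ k) (c * y) = c * (inv \<sigma> ^^ k) y"
proof -
  have inv_mult: "inv \<sigma> (a * b) = inv \<sigma> a * inv \<sigma> b" for a b
    by (metis assms(1) bij_inv_eq_iff mult)
  have "inv \<sigma> c = c" by (metis assms(1) bij_inv_eq_iff fixed)
  then show ?thesis by (induction k) (simp_all add: inv_mult)
qed

lemma smult_embR_clears_denominators:
  fixes M :: "'a::idom ratfun poly"
  assumes "\<And>i. coeff M i \<in> range embQx"
  obtains c where "c \<noteq> 0" "\<And>i. coeff (smult (embR c) M) i \<in> range embRx"
proof -
  have "\<forall>i. \<exists>q. coeff M i = embQx q" using assms by blast
  then obtain f where f: "\<And>i. coeff M i = embQx (f i)" by metis
  obtain c where c: "c \<noteq> 0"
    and cleared: "\<And>i. i \<le> degree M \<Longrightarrow> \<exists>q0. fract_poly q0 = smult (to_fract c) (f i)"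
    using fract_poly_clear_common_denominator[of "{..degree M}" f] by auto
  have "coeff (smult (embR c) M) i \<in> range embRx" for i
  proof (cases "i \<le> degree M")
    case True
    then obtain q0 where "fract_poly q0 = smult (to_fract c) (f i)" using cleared by blast
    then have "embRx q0 = coeff (smult (embR c) M) i" by (simp add: embRx_cleared f)
    then show ?thesis by (metis rangeI)
  next
    case False
    then have "coeff (smult (embR c) M) i = embRx 0" by (simp add: coeff_eq_0 embRx_def)
    then show ?thesis by blast
  qed
  with c that show ?thesis by blast
qed

lemma lead_coeff_condition_cleared:
  fixes \<sigma> :: "'a::idom ratfun \<Rightarrow> 'a ratfun" and p :: "'a poly"
  assumes "bij \<sigma>" "\<And>f g. \<sigma> (f * g) = \<sigma> f * \<sigma> g" "\<And>c. \<sigma> (embR c) = embR c"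
    and prim: "primitive_poly p" and c: "c \<noteq> 0"
    and v: "v \<noteq> 0" and cop: "coprime_in (fract_poly p) w"
    and lc: "(inv \<sigma> ^^ k) l = embQx w / (embQx v * embQx (fract_poly p)) * l'"
  obtains w' v' where "v' \<noteq> 0" "coprime_in p w'"
    "(inv \<sigma> ^^ k) (embR c * l) = embRx w' / (embRx v' * embRx p) * l'"
proof -
  obtain dw w0 where dw: "dw \<noteq> 0" "fract_poly w0 = smult (to_fract dw) w"
    by (rule fract_poly_clear_denominators)
  obtain dv v0 where dv: "dv \<noteq> 0" "fract_poly v0 = smult (to_fract dv) v"
    by (rule fract_poly_clear_denominators)
  have "(inv \<sigma> ^^ k) (embR c * l) = embR c * (embQx w / (embQx v * embRx p) * l')"
    using funpow_inv_mult_fixed[OF assms(1,2,3)] lc by (simp add: embQx_fract_poly)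
  also have "\<dots> = embRx (smult (c * dv) w0) / (embRx (smult dw v0) * embRx p) * l'"
    using dw dv by (simp add: embRx_smult embRx_cleared embR_mult field_simps)
  finally have "(inv \<sigma> ^^ k) (embR c * l) = \<dots>" .
  moreover have "coprime_in p (smult (c * dv) w0)"
    by (rule coprime_in_fract_poly_cleared[OF prim cop, of _ "to_fract (c * dv) * to_fract dw"])
      (use dw dv c in simp_all)
  moreover have "smult dw v0 \<noteq> 0" using dw dv v by auto
  ultimately show ?thesis using that by blast
qed

lemma p_removing_clear_denominators:
  fixes \<sigma> \<delta> :: "'a::idom ratfun \<Rightarrow> 'a ratfun" and p :: "'a poly"
  assumes "bij \<sigma>" "\<And>f g. \<sigma> (f * g) = \<sigma> f * \<sigma> g" "\<And>c. \<sigma> (embR c) = embR c"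
    and prim: "primitive_poly p"
    and P: "p_removing \<sigma> \<delta> embQx (fract_poly p) L P k"
  shows "\<exists>P'. p_removing \<sigma> \<delta> embRx p L P' k"
proof -
  define M where "M = ore_mult \<sigma> \<delta> P L"
  from P have "P \<noteq> 0" "degree P = k" "\<And>i. coeff M i \<in> range embQx"
    unfolding p_removing_def M_def by blast+
  from P obtain w v where "v \<noteq> 0" "coprime_in (fract_poly p) w"
    "(inv \<sigma> ^^ k) (lead_coeff M) = embQx w / (embQx v * embQx (fract_poly p)) * lead_coeff L"
    unfolding p_removing_def M_def by blast
  moreover obtain c where c: "c \<noteq> 0" "\<And>i. coeff (smult (embR c) M) i \<in> range embRx"
    using smult_embR_clears_denominators \<open>\<And>i. coeff M i \<in> range embQx\<close> by blast
  ultimately obtain w' v' where "v' \<noteq> 0" "coprime_in p w'"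
    "(inv \<sigma> ^^ k) (embR c * lead_coeff M) = embRx w' / (embRx v' * embRx p) * lead_coeff L"
    using lead_coeff_condition_cleared[OF assms(1-4)] by metis
  moreover have "ore_mult \<sigma> \<delta> (smult (embR c) P) L = smult (embR c) M"
    unfolding M_def using c by (simp add: ore_mult_smult)
  ultimately have "p_removing \<sigma> \<delta> embRx p L (smult (embR c) P) k"
    unfolding p_removing_def using \<open>P \<noteq> 0\<close> \<open>degree P = k\<close> c
    by (simp only: degree_smult_eq coeff_smult embR_eq_0_iff smult_eq_0_iff if_False simp_thms) blast
  then show ?thesis by blast
qed

theorem mainTheorem17:
  fixes \<sigma> \<delta> :: "'a::idom ratfun \<Rightarrow> 'a ratfun"
    and \<gamma> \<tau> a1 a0 :: 'a
    and L :: "'a poly poly" and p :: "'a poly"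
  assumes pid: "is_pid TYPE('a)"
    and \<gamma>_unit: "\<gamma> dvd 1"
    and \<sigma>_bij: "bij \<sigma>"
    and \<sigma>_add: "\<And>f g. \<sigma> (f + g) = \<sigma> f + \<sigma> g"
    and \<sigma>_mult: "\<And>f g. \<sigma> (f * g) = \<sigma> f * \<sigma> g"
    and \<sigma>_one: "\<sigma> 1 = 1"
    and \<sigma>_R: "\<And>c. \<sigma> (embR c) = embR c"
    and \<sigma>_x: "\<sigma> varX = embR \<gamma> * varX + embR \<tau>"
    and \<delta>_add: "\<And>f g. \<delta> (f + g) = \<delta> f + \<delta> g"
    and \<delta>_mult: "\<And>f g. \<delta> (f * g) = \<sigma> f * \<delta> g + \<delta> f * g"
    and \<delta>_R: "\<And>c. \<delta> (embR c) = 0"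
    and \<delta>_x: "\<delta> varX = embR a1 * varX + embR a0"
    and order_pos: "degree L > 0"
    and prim: "primitive_poly p"
    and p_dvd: "p dvd lead_coeff L"
    and exQ: "\<exists>P. p_removing \<sigma> \<delta> embQx (map_poly to_fract p) (map_poly embRx L) P k"
  shows "\<exists>P. p_removing \<sigma> \<delta> embRx p (map_poly embRx L) P k"
proof -
  from exQ obtain P
    where "p_removing \<sigma> \<delta> embQx (fract_poly p) (map_poly embRx L) P k" ..
  then show ?thesis by (rule p_removing_clear_denominators[OF \<sigma>_bij \<sigma>_mult \<sigma>_R prim])
qed

end
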